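(* Let $p(x)\in\mathbb{C}((x))$ and set $\phi(x,z)=e^{zp(x)\frac{d}{dx}}x=\sum_{n\ge0}\frac{z^n}{n!}\left(p(x)\frac{d}{dx}\right)^nx\in\mathbb{C}((x))[[z]]$. Then $\phi(x,z)$ is an associate of the additive formal group $F(x,y)=x+y$. Moreover, every associate $\phi(x,z)$ of $F(x,y)=x+y$ is of this form, with $p(x)$ uniquely determined (namely $p(x)=\frac{\partial\phi}{\partial z}(x,0)$).
   Context: An associate of the one-dimensional additive formal group $F(x,y)=x+y$ is a formal series $\phi(x,z)\in\mathbb{C}((x))[[z]]$ such that $\phi(x,0)=x$ and $\phi(\phi(x,x_2),x_0)=\phi(x,x_0+x_2)$, where, writing $\phi(x,z)=\sum_{n\ge0}f_n(x)z^n$, $\phi(\phi(x,x_2),x_0):=\sum_n f_n(\phi(x,x_2))x_0^n\in\mathbb{C}((x))[[x_0,x_2]]$ (for $f\in\mathbb{C}((x))$, $f(\phi(x,x_2))$ is defined using that $\phi(x,x_2)$ is a unit of $\mathbb{C}((x))[[x_2]]$). *)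

theory Defs
  imports "HOL-Computational_Algebra.Formal_Laurent_Series"
begin

text \<open>C((x)) is the type complex fls (formal Laurent series in x);
  C((x))[[z]] is the type complex fls fps (power series in z with coefficients in C((x))).
  For phi :: complex fls fps, fps_nth phi n is the coefficient f_n(x) of z^n.\<close>

text \<open>Coefficient of x^j x2^m in f(psi(x,x2)), where f = sum_k a_k x^k is a Laurent series
  and psi is a unit of C((x))[[x2]]; f(psi) = sum_k a_k psi^k (psi^k for negative k taken
  in C((x))[[x2]] via the inverse of the unit psi).  For fixed m and j only finitely many k
  contribute (x-adic convergence), so the coefficient is the finite sum over the support.\<close>
definition subst_coeff :: "complex fls \<Rightarrow> complex fls fps \<Rightarrow> nat \<Rightarrow> int \<Rightarrow> complex" where
  "subst_coeff f psi m j =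
     (\<Sum>k\<in>{k::int. fls_nth f k * fls_nth (fps_nth (psi powi k) m) j \<noteq> 0}.
        fls_nth f k * fls_nth (fps_nth (psi powi k) m) j)"

text \<open>phi is an associate of F(x,y) = x + y: phi(x,0) = x and
  phi(phi(x,x2),x0) = phi(x,x0+x2) in C((x))[[x0,x2]], compared coefficientwise:
  the coefficient of x0^n0 x2^n2 on the left is f_n0(phi(x,x2)) at x2^n2, and on the
  right (sum_n f_n (x0+x2)^n) it is binom(n0+n2,n0) f_(n0+n2).\<close>
definition additive_associate :: "complex fls fps \<Rightarrow> bool" where
  "additive_associate phi \<longleftrightarrow>
     fps_nth phi 0 = fls_X \<and>
     (\<forall>n0 n2 :: nat. \<forall>j :: int.
        subst_coeff (fps_nth phi n0) phi n2 j =
        of_nat ((n0 + n2) choose n0) * fls_nth (fps_nth phi (n0 + n2)) j)"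

definition exp_vf :: "complex fls \<Rightarrow> complex fls fps" where
  "exp_vf p = Abs_fps (\<lambda>n. ((\<lambda>g. p * fls_deriv g) ^^ n) fls_X / of_nat (fact n))"

end

theory Submission
  imports Defs
begin

text \<open>Write \<open>D = p d/dx\<close>. Since \<open>D\<close> is a derivation, \<open>f \<mapsto> exp(zD) f\<close> is a ring
  homomorphism (both \<open>exp(zD)(fg)\<close> and \<open>exp(zD) f \<cdot> exp(zD) g\<close> solve \<open>\<partial>\<^sub>z A = D A\<close> with
  the same value at \<open>z = 0\<close>), and since \<open>D\<close> lowers the \<open>x\<close>-adic order by a bounded amount it
  is also continuous. Hence \<open>f(exp(zD) x) = exp(zD) f\<close>, and the associativity identity
  becomes \<open>exp(x\<^sub>2 D) exp(x\<^sub>0 D) = exp((x\<^sub>0 + x\<^sub>2) D)\<close>. Conversely, the part of the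
  associativity identity of an associate \<open>\<phi>\<close> that is linear in \<open>x\<^sub>2\<close> is the chain rule
  \<open>\<partial>\<^sub>z \<phi> = \<phi>\<^sub>1 \<partial>\<^sub>x \<phi>\<close> with \<open>\<phi>\<^sub>1 = \<partial>\<^sub>z \<phi>(x,0)\<close>, so by uniqueness of solutions
  \<open>\<phi> = exp(z \<phi>\<^sub>1 d/dx) x\<close>.\<close>

unbundle fps_syntax

lemma fps_inverse_nth_1:
  fixes A :: "'a::field fps"
  assumes "A $ 0 \<noteq> 0"
  shows "inverse A $ 1 = - A $ 1 / (A $ 0)\<^sup>2"
proof -
  have "(inverse A * A) $ 1 = 0"
    using assms by (simp add: inverse_mult_eq_1)
  then have "inverse (A $ 0) * A $ 1 + inverse A $ 1 * A $ 0 = 0"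
    by (simp only: fps_mult_nth_1 fps_inverse_nth_0)
  then show ?thesis
    using assms by (simp add: field_simps power2_eq_square add_eq_0_iff2)
qed

lemma fps_power_int_nth_1:
  fixes A :: "'a::field fps"
  assumes "A $ 0 \<noteq> 0"
  shows "(A powi k) $ 1 = of_int k * (A $ 0) powi (k - 1) * A $ 1"
proof (cases "0 \<le> k")
  case True
  then obtain n where k: "k = int n"
    using nonneg_int_cases by blast
  then have "(A powi k) $ 1 = of_nat n * (A $ 0) ^ (n - 1) * A $ 1"
    by (simp only: power_int_of_nat fps_power_first)
  moreover have "of_int k * (A $ 0) powi (k - 1) = of_nat n * (A $ 0) ^ (n - 1)"
  proof (cases n)
    case (Suc m)
    then have "k - 1 = int m" by (simp add: k)
    then show ?thesis by (simp add: k Suc)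
  qed (simp add: k)
  ultimately show ?thesis
    by simp
next
  case False
  then obtain n where n: "k = - int (Suc n)"
    by (cases k rule: int_cases) simp_all
  have "A powi k = inverse A ^ Suc n"
    by (simp add: n power_int_def nat_add_distrib)
  then have "(A powi k) $ 1 = of_nat (Suc n) * inverse (A $ 0) ^ n * inverse A $ 1"
    by (simp only: fps_power_first fps_inverse_nth_0 diff_Suc_1)
  also have "\<dots> = - of_nat (Suc n) * inverse (A $ 0) ^ Suc (Suc n) * A $ 1"
    unfolding fps_inverse_nth_1[OF assms] using assms by (simp add: field_simps power2_eq_square)
  also have "inverse (A $ 0) ^ Suc (Suc n) = (A $ 0) powi (k - 1)"
    by (simp add: n power_int_def nat_add_distrib)
  finally show ?thesis
    by (simp add: n)
qed

definition vf_deriv :: "'a::comm_ring_1 fls \<Rightarrow> 'a fls \<Rightarrow> 'a fls" where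
  "vf_deriv p g = p * fls_deriv g"

lemma vf_deriv_iterate_zero [simp]: "(vf_deriv p ^^ n) 0 = 0"
  by (induction n) (simp_all add: vf_deriv_def)

lemma vf_deriv_iterate_add:
  "(vf_deriv p ^^ n) (f + g) = (vf_deriv p ^^ n) f + (vf_deriv p ^^ n) g"
  by (induction n) (simp_all add: vf_deriv_def algebra_simps)

lemma vf_deriv_iterate_const_mult:
  "(vf_deriv p ^^ n) (fls_const c * f) = fls_const c * (vf_deriv p ^^ n) f"
  by (induction n) (simp_all add: vf_deriv_def algebra_simps)

lemma vf_deriv_iterate_sum:
  "(vf_deriv p ^^ n) (\<Sum>i\<in>S. f i) = (\<Sum>i\<in>S. (vf_deriv p ^^ n) (f i))"
  by (induction S rule: infinite_finite_induct) (simp_all add: vf_deriv_iterate_add)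

lemma vf_deriv_iterate_one: "(vf_deriv p ^^ n) 1 = (if n = 0 then 1 else 0)"
  by (cases n) (simp_all add: funpow_Suc_right vf_deriv_def del: funpow.simps)

definition vf_flow :: "'a::field_char_0 fls \<Rightarrow> 'a fls \<Rightarrow> 'a fls fps" where
  "vf_flow p f = Abs_fps (\<lambda>n. fls_const (inverse (fact n)) * (vf_deriv p ^^ n) f)"

lemma vf_flow_nth: "vf_flow p f $ n = fls_const (inverse (fact n)) * (vf_deriv p ^^ n) f"
  by (simp add: vf_flow_def)

definition fps_vf_deriv :: "'a::comm_ring_1 fls \<Rightarrow> 'a fls fps \<Rightarrow> 'a fls fps" where
  "fps_vf_deriv p A = Abs_fps (\<lambda>n. vf_deriv p (A $ n))"

lemma fps_vf_deriv_mult: "fps_vf_deriv p (A * B) = fps_vf_deriv p A * B + A * fps_vf_deriv p B"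
  by (rule fps_ext) (simp add: fps_vf_deriv_def vf_deriv_def fps_mult_nth fls_deriv_sum
      sum_distrib_left sum.distrib[symmetric] distrib_left mult.assoc mult.left_commute[of p]
      add.commute)

lemma fps_deriv_vf_flow: "fps_deriv (vf_flow p f) = fps_vf_deriv p (vf_flow p f)"
proof (rule fps_ext)
  fix n
  have "of_nat (Suc n) * inverse (fact (Suc n)) = (inverse (fact n) :: 'a)"
    by (simp add: field_simps del: of_nat_Suc)
  then have "fls_const (of_nat (Suc n)) * fls_const (inverse (fact (Suc n))) =
      (fls_const (inverse (fact n)) :: 'a fls)"
    by (simp only: fls_const_mult_const)
  then show "fps_deriv (vf_flow p f) $ n = fps_vf_deriv p (vf_flow p f) $ n"
    by (simp add: fps_vf_deriv_def vf_flow_nth vf_deriv_def fls_of_nat mult.assoc[symmetric]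
        del: of_nat_Suc fact_Suc fls_const_mult_const)
qed

lemma vf_flow_unique:
  assumes "fps_deriv A = fps_vf_deriv p A"
  shows "A = vf_flow p (A $ 0)"
proof (rule fps_ext)
  fix n show "A $ n = vf_flow p (A $ 0) $ n"
  proof (induction n)
    case 0
    then show ?case by (simp add: vf_flow_nth)
  next
    case (Suc n)
    have "fls_const (of_nat (Suc n)) * A $ Suc n = vf_deriv p (A $ n)"
      using arg_cong[OF assms, of "\<lambda>B. B $ n"]
      by (simp add: fps_vf_deriv_def fls_of_nat del: of_nat_Suc)
    then have "A $ Suc n = fls_const (inverse (of_nat (Suc n))) * vf_deriv p (A $ n)"
      by (metis (no_types, lifting) fls_const_mult_const mult.assoc mult_1 fls_const_1
          of_nat_neq_0 left_inverse)
    then show ?case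
      by (simp add: Suc vf_flow_nth vf_deriv_def algebra_simps fls_const_mult_const[symmetric]
          del: of_nat_Suc fls_const_mult_const)
  qed
qed

lemma vf_flow_mult: "vf_flow p (f * g) = vf_flow p f * vf_flow p g"
proof -
  have "vf_flow p f * vf_flow p g = vf_flow p ((vf_flow p f * vf_flow p g) $ 0)"
    by (rule vf_flow_unique) (simp add: fps_deriv_vf_flow fps_vf_deriv_mult add.commute)
  then show ?thesis
    by (simp add: vf_flow_nth)
qed

lemma vf_flow_1: "vf_flow p 1 = 1"
  by (rule fps_ext) (simp add: vf_flow_nth vf_deriv_iterate_one)

lemma vf_flow_power: "vf_flow p (f ^ n) = vf_flow p f ^ n"
  by (induction n) (simp_all add: vf_flow_1 vf_flow_mult)

lemma vf_flow_inverse: "f \<noteq> 0 \<Longrightarrow> vf_flow p (inverse f) = inverse (vf_flow p f)"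
  by (rule fps_inverse_unique[symmetric]) (simp add: vf_flow_mult[symmetric] vf_flow_1)

lemma vf_flow_power_int: "f \<noteq> 0 \<Longrightarrow> vf_flow p (f powi k) = vf_flow p f powi k"
  by (simp add: power_int_def vf_flow_power vf_flow_inverse)

definition vanishes_below :: "int \<Rightarrow> 'a::zero fls \<Rightarrow> bool" where
  "vanishes_below N f \<longleftrightarrow> (\<forall>i<N. f $$ i = 0)"

lemma vanishes_below_vf_deriv:
  fixes f p :: "'a::comm_ring_1 fls"
  assumes "vanishes_below N f"
  shows "vanishes_below (N + fls_subdegree p - 1) (vf_deriv p f)"
  unfolding vanishes_below_def
proof (intro allI impI)
  fix i assume i: "i < N + fls_subdegree p - 1"
  show "vf_deriv p f $$ i = 0"
  proof (cases "fls_deriv f = 0")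
    case False
    have "N - 1 \<le> fls_subdegree (fls_deriv f)"
      using assms by (intro fls_subdegree_geI[OF False]) (simp add: vanishes_below_def)
    with i show ?thesis
      unfolding vf_deriv_def by (intro fls_times_nth_eq0) simp
  qed (simp add: vf_deriv_def)
qed

lemma vanishes_below_vf_deriv_iterate:
  fixes f p :: "'a::comm_ring_1 fls"
  assumes "vanishes_below N f"
  shows "vanishes_below (N + int n * (fls_subdegree p - 1)) ((vf_deriv p ^^ n) f)"
proof (induction n)
  case (Suc n)
  then show ?case
    using vanishes_below_vf_deriv[OF Suc.IH] by (simp add: algebra_simps)
qed (use assms in simp)

text \<open>\<open>D\<^sup>m\<close> lowers the order by at most \<open>m (1 - ord p)\<close>, so the coefficient of \<open>x\<^sup>j\<close> in
  \<open>D\<^sup>m f\<close> only sees the coefficients of \<open>f\<close> up to \<open>x\<^sup>N\<close>; this is the continuity of \<open>D\<^sup>m\<close>.\<close>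
lemma vf_deriv_iterate_nth_eq_sum:
  fixes f p :: "'a::field fls" and m :: nat and j :: int
  defines "N \<equiv> j - int m * (fls_subdegree p - 1)"
  shows "(vf_deriv p ^^ m) f $$ j =
    (\<Sum>k\<in>{fls_subdegree f..N}. f $$ k * (vf_deriv p ^^ m) (fls_X powi k) $$ j)"
proof -
  define P where "P = (\<Sum>k\<in>{fls_subdegree f..N}. fls_const (f $$ k) * fls_X powi k)"
  have "vanishes_below (N + 1) (f - P)"
    unfolding vanishes_below_def
  proof (intro allI impI)
    fix i assume "i < N + 1"
    then have "P $$ i = f $$ i"
      by (auto simp: P_def fls_nth_sum if_distrib nth_less_subdegree_zero cong: if_cong)
    then show "(f - P) $$ i = 0" by simp
  qed
  then have "vanishes_below (j + 1) ((vf_deriv p ^^ m) (f - P))"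
    using vanishes_below_vf_deriv_iterate[of "N + 1" "f - P" m p] by (simp add: N_def)
  then have "(vf_deriv p ^^ m) (f - P) $$ j = 0"
    by (simp add: vanishes_below_def)
  moreover have "(vf_deriv p ^^ m) f = (vf_deriv p ^^ m) P + (vf_deriv p ^^ m) (f - P)"
    by (metis add_diff_cancel_left' add_diff_eq vf_deriv_iterate_add)
  ultimately show ?thesis
    by (simp add: P_def vf_deriv_iterate_sum vf_deriv_iterate_const_mult fls_nth_sum)
qed

lemma exp_vf_eq_vf_flow: "exp_vf p = vf_flow p fls_X"
proof (rule fps_ext)
  fix n
  have "g / of_nat (fact n) = fls_const (inverse (fact n)) * g" for g :: "complex fls"
    by (simp add: fls_of_nat divide_inverse fls_inverse_const mult.commute)
  then show "exp_vf p $ n = vf_flow p fls_X $ n"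
    by (simp add: exp_vf_def vf_flow_nth vf_deriv_def[abs_def])
qed

lemma exp_vf_nth_0 [simp]: "exp_vf p $ 0 = fls_X"
  by (simp add: exp_vf_eq_vf_flow vf_flow_nth)

lemma exp_vf_nth_1 [simp]: "exp_vf p $ Suc 0 = p"
  by (simp add: exp_vf_eq_vf_flow vf_flow_nth vf_deriv_def)

lemma subst_coeff_exp_vf: "subst_coeff f (exp_vf p) m j = vf_flow p f $ m $$ j"
proof -
  define N where "N = j - int m * (fls_subdegree p - 1)"
  define c where "c k = (vf_deriv p ^^ m) (fls_X powi k) $$ j" for k
  have term_eq: "f $$ k * exp_vf p powi k $ m $$ j = inverse (fact m) * (f $$ k * c k)" for k
    by (simp add: exp_vf_eq_vf_flow vf_flow_power_int[symmetric] vf_flow_nth c_def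
        del: fls_X_power_int)
  have "c k = 0" if "N < k" for k
    using that vanishes_below_vf_deriv_iterate[of k "fls_X powi k" m p]
    by (simp add: vanishes_below_def c_def N_def)
  then have support: "{k. f $$ k * exp_vf p powi k $ m $$ j \<noteq> 0} \<subseteq> {fls_subdegree f..N}"
    by (auto simp: term_eq fls_subdegree_leI) (meson leI)
  have "subst_coeff f (exp_vf p) m j =
      (\<Sum>k\<in>{fls_subdegree f..N}. f $$ k * exp_vf p powi k $ m $$ j)"
    unfolding subst_coeff_def by (rule sum.mono_neutral_left[OF _ support]) auto
  also have "\<dots> = inverse (fact m) * (\<Sum>k\<in>{fls_subdegree f..N}. f $$ k * c k)"
    by (simp add: term_eq sum_distrib_left)
  also have "\<dots> = vf_flow p f $ m $$ j"
    using vf_deriv_iterate_nth_eq_sum[where f = f and p = p and m = m and j = j]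
    by (simp add: vf_flow_nth c_def N_def)
  finally show ?thesis .
qed

lemma exp_vf_additive_associate: "additive_associate (exp_vf p)"
  unfolding additive_associate_def
proof (intro conjI allI)
  show "exp_vf p $ 0 = fls_X"
    by (rule exp_vf_nth_0)
  fix n0 n2 :: nat and j :: int
  have "(fact n0 * fact n2 * of_nat ((n0 + n2) choose n0) :: complex) = fact (n0 + n2)"
    using binomial_fact_lemma[of n0 "n0 + n2"]
    by (metis add_diff_cancel_left' le_add1 of_nat_fact of_nat_mult)
  then have binomial: "inverse (fact n2) * inverse (fact n0) =
      of_nat ((n0 + n2) choose n0) * (inverse (fact (n0 + n2)) :: complex)"
    by (simp add: field_simps)
  have "subst_coeff (exp_vf p $ n0) (exp_vf p) n2 j = vf_flow p (exp_vf p $ n0) $ n2 $$ j"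
    by (rule subst_coeff_exp_vf)
  also have "\<dots> = inverse (fact n2) * inverse (fact n0) * (vf_deriv p ^^ (n2 + n0)) fls_X $$ j"
    by (simp add: exp_vf_eq_vf_flow vf_flow_nth vf_deriv_iterate_const_mult funpow_add)
  also have "\<dots> = of_nat ((n0 + n2) choose n0) * exp_vf p $ (n0 + n2) $$ j"
    by (simp add: binomial exp_vf_eq_vf_flow vf_flow_nth add.commute)
  finally show "subst_coeff (exp_vf p $ n0) (exp_vf p) n2 j =
      of_nat ((n0 + n2) choose n0) * exp_vf p $ (n0 + n2) $$ j" .
qed

text \<open>To first order in \<open>z\<close>, substitution into \<open>\<phi> = x + z \<phi>\<^sub>1 + \<dots>\<close> is the chain rule.\<close>
lemma subst_coeff_1_eq:
  assumes "phi $ 0 = fls_X"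
  shows "subst_coeff f phi 1 j = (phi $ 1 * fls_deriv f) $$ j"
proof -
  have "phi powi k $ 1 = exp_vf (phi $ 1) powi k $ 1" for k
    by (subst (1 2) fps_power_int_nth_1) (simp_all add: assms)
  then have "subst_coeff f phi 1 j = subst_coeff f (exp_vf (phi $ 1)) 1 j"
    by (simp only: subst_coeff_def)
  also have "\<dots> = (phi $ 1 * fls_deriv f) $$ j"
    by (simp add: subst_coeff_exp_vf vf_flow_nth vf_deriv_def)
  finally show ?thesis .
qed

lemma additive_associate_fps_deriv:
  assumes "additive_associate phi"
  shows "fps_deriv phi = fps_vf_deriv (phi $ 1) phi"
proof (intro fps_ext fls_eqI)
  fix n :: nat and j :: int
  have "of_nat (Suc n) * phi $ Suc n $$ j = subst_coeff (phi $ n) phi 1 j"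
    using assms unfolding additive_associate_def by (metis Suc_eq_plus1 binomial_Suc_n)
  also have "\<dots> = (phi $ 1 * fls_deriv (phi $ n)) $$ j"
    using assms by (intro subst_coeff_1_eq) (simp add: additive_associate_def)
  finally show "fps_deriv phi $ n $$ j = fps_vf_deriv (phi $ 1) phi $ n $$ j"
    by (simp add: fps_vf_deriv_def vf_deriv_def fls_of_nat del: of_nat_Suc)
qed

lemma additive_associate_eq_exp_vf:
  assumes "additive_associate phi"
  shows "phi = exp_vf (phi $ 1)"
proof -
  have "phi = vf_flow (phi $ 1) (phi $ 0)"
    using additive_associate_fps_deriv[OF assms] by (rule vf_flow_unique)
  also have "\<dots> = exp_vf (phi $ 1)"
    using assms by (simp add: additive_associate_def exp_vf_eq_vf_flow)
  finally show ?thesis .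
qed

theorem proposition2p4:
  shows "(\<forall>p :: complex fls. additive_associate (exp_vf p)) \<and>
         (\<forall>phi :: complex fls fps. additive_associate phi \<longrightarrow>
            (\<exists>!p. phi = exp_vf p) \<and> phi = exp_vf (fps_nth (fps_deriv phi) 0))"
proof (intro conjI allI impI)
  fix p :: "complex fls"
  show "additive_associate (exp_vf p)"
    by (rule exp_vf_additive_associate)
next
  fix phi :: "complex fls fps"
  assume assoc: "additive_associate phi"
  show "\<exists>!p. phi = exp_vf p"
  proof
    show "phi = exp_vf (phi $ 1)"
      using assoc by (rule additive_associate_eq_exp_vf)
  next
    fix q assume "phi = exp_vf q"
    then show "q = phi $ 1" by simp
  qed
  show "phi = exp_vf (fps_deriv phi $ 0)"
    using additive_associate_eq_exp_vf[OF assoc] by simp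
qed

end
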